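(* Let $H$ and $G$ be as in the construction described in the context. If $H$ is torsion free, then so is $G$; if $H$ is locally indicable, then so is $G$.
   Context: A group is locally indicable if every nontrivial finitely generated subgroup admits a surjective homomorphism onto $\mathbb{Z}$. Construction: $H$ is a group generated by a countable set $\{a^{(1)},a^{(2)},\ldots\}$. For groups $A,B$, the wreath product $A\,\mathrm{Wr}\,B$ is the semidirect product $A^B\rtimes B$, where $A^B$ is the group of all functions $B\to A$ with pointwise multiplication and $B$ acts by $(bf)(x)=f(xb)$. Let $Z=\langle z\rangle$ be infinite cyclic and let $b^{(i)}\in H^Z$ be given by $b^{(i)}(z^k)=a^{(i)}$ if $k>0$ and $b^{(i)}(z^k)=1$ otherwise. Let $K=\langle z,b^{(i)}\ (i\in\mathbb{N})\rangle\le H\,\mathrm{Wr}\,Z$. Let $\langle s\rangle$ be infinite cyclic and let $c\in K^{\langle s\rangle}$ be given by $c(s)=z$, $c(s^{2^i})=b^{(i)}$ for $i>0$, and $c(s^k)=1$ otherwise. Let $G=\langle c,s\rangle\le K\,\mathrm{Wr}\,\langle s\rangle$. *)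

theory Defs
  imports "HOL-Algebra.Algebra"
begin

text \<open>Unrestricted wreath product A Wr B = A^B semidirect B, where A^B is the group of all
functions B -> A (extensional: undefined outside carrier B), and B acts by (b f)(x) = f(x b).\<close>
definition wreath :: "('a,'c) monoid_scheme \<Rightarrow> ('b,'d) monoid_scheme \<Rightarrow> (('b \<Rightarrow> 'a) \<times> 'b) monoid" where
  "wreath A B = \<lparr>carrier = {(f,b). (\<forall>x\<in>carrier B. f x \<in> carrier A)
                                 \<and> (\<forall>x. x \<notin> carrier B \<longrightarrow> f x = undefined) \<and> b \<in> carrier B},
     monoid.mult = (\<lambda>(f,b) (g,c). (\<lambda>x. if x \<in> carrier B then f x \<otimes>\<^bsub>A\<^esub> g (x \<otimes>\<^bsub>B\<^esub> b) else undefined,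
                           b \<otimes>\<^bsub>B\<^esub> c)),
     monoid.one = (\<lambda>x. if x \<in> carrier B then \<one>\<^bsub>A\<^esub> else undefined, \<one>\<^bsub>B\<^esub>)\<rparr>"

definition torsion_free :: "('a,'c) monoid_scheme \<Rightarrow> bool" where
  "torsion_free G \<longleftrightarrow> (\<forall>x\<in>carrier G. x \<noteq> \<one>\<^bsub>G\<^esub> \<longrightarrow> (\<forall>n::nat. n > 0 \<longrightarrow> x [^]\<^bsub>G\<^esub> n \<noteq> \<one>\<^bsub>G\<^esub>))"

definition locally_indicable :: "('a,'c) monoid_scheme \<Rightarrow> bool" where
  "locally_indicable G \<longleftrightarrow>
     (\<forall>S. finite S \<and> S \<subseteq> carrier G \<and> generate G S \<noteq> {\<one>\<^bsub>G\<^esub>} \<longrightarrow>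
        (\<exists>f. f \<in> hom (subgroup_generated G S) integer_group \<and> f ` generate G S = UNIV))"

text \<open>Z = <z> is modelled as integer_group with z = 1.\<close>
definition KW :: "('a,'c) monoid_scheme \<Rightarrow> ((int \<Rightarrow> 'a) \<times> int) monoid" where
  "KW H = wreath H integer_group"

definition zelt :: "('a,'c) monoid_scheme \<Rightarrow> (int \<Rightarrow> 'a) \<times> int" where
  "zelt H = (\<lambda>_. \<one>\<^bsub>H\<^esub>, 1)"

definition belt :: "('a,'c) monoid_scheme \<Rightarrow> (nat \<Rightarrow> 'a) \<Rightarrow> nat \<Rightarrow> (int \<Rightarrow> 'a) \<times> int" where
  "belt H a i = (\<lambda>k. if k > 0 then a i else \<one>\<^bsub>H\<^esub>, 0)"

definition Kgrp :: "('a,'c) monoid_scheme \<Rightarrow> (nat \<Rightarrow> 'a) \<Rightarrow> ((int \<Rightarrow> 'a) \<times> int) monoid" where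
  "Kgrp H a = (KW H)\<lparr>carrier := generate (KW H) (insert (zelt H) (belt H a ` {1..}))\<rparr>"

text \<open><s> is modelled as integer_group with s = 1.\<close>
definition GW :: "('a,'c) monoid_scheme \<Rightarrow> (nat \<Rightarrow> 'a)
                  \<Rightarrow> ((int \<Rightarrow> (int \<Rightarrow> 'a) \<times> int) \<times> int) monoid" where
  "GW H a = wreath (Kgrp H a) integer_group"

definition cfun :: "('a,'c) monoid_scheme \<Rightarrow> (nat \<Rightarrow> 'a) \<Rightarrow> int \<Rightarrow> (int \<Rightarrow> 'a) \<times> int" where
  "cfun H a k = (if k = 1 then zelt H
                 else if (\<exists>i::nat. i > 0 \<and> k = 2 ^ i) then belt H a (THE i::nat. i > 0 \<and> k = 2 ^ i)
                 else \<one>\<^bsub>Kgrp H a\<^esub>)"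

definition celt :: "('a,'c) monoid_scheme \<Rightarrow> (nat \<Rightarrow> 'a) \<Rightarrow> (int \<Rightarrow> (int \<Rightarrow> 'a) \<times> int) \<times> int" where
  "celt H a = (cfun H a, 0)"

definition selt :: "('a,'c) monoid_scheme \<Rightarrow> (nat \<Rightarrow> 'a) \<Rightarrow> (int \<Rightarrow> (int \<Rightarrow> 'a) \<times> int) \<times> int" where
  "selt H a = (\<lambda>_. \<one>\<^bsub>Kgrp H a\<^esub>, 1)"

definition Ggrp :: "('a,'c) monoid_scheme \<Rightarrow> (nat \<Rightarrow> 'a)
                    \<Rightarrow> ((int \<Rightarrow> (int \<Rightarrow> 'a) \<times> int) \<times> int) monoid" where
  "Ggrp H a = (GW H a)\<lparr>carrier := generate (GW H a) {celt H a, selt H a}\<rparr>"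

end

theory Submission imports Defs begin

text \<open>Both properties are inherited by subgroups, so it suffices that they pass from A to
  A Wr Z; applying this twice gives them for K \<le> H Wr Z and then for G \<le> K Wr Z.
  Torsion: an element (f, b) of A Wr Z has n-th power with Z-part n b, so a torsion element lies
  in the base group A^Z, where powers are taken pointwise.
  Local indicability: if a finitely generated subgroup of A Wr Z is not contained in the base
  group, its image under the projection to Z is a nonzero subgroup d Z, and dividing by d gives
  a surjection onto Z. Otherwise it lies in A^Z, and evaluation at a coordinate where one of its
  elements is nontrivial maps it onto a nontrivial finitely generated subgroup of A, which
  surjects onto Z.\<close>

abbreviation wreath_int :: "('a,'c) monoid_scheme \<Rightarrow> ((int \<Rightarrow> 'a) \<times> int) monoid" where
  "wreath_int A \<equiv> wreath A integer_group"

lemma carrier_wreath_int: "carrier (wreath_int A) = {(f,b). \<forall>x. f x \<in> carrier A}"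
  by (auto simp: wreath_def integer_group_def)

lemma mult_wreath_int:
  "p \<otimes>\<^bsub>wreath_int A\<^esub> q = (\<lambda>x. fst p x \<otimes>\<^bsub>A\<^esub> fst q (x + snd p), snd p + snd q)"
  by (cases p; cases q) (simp add: wreath_def integer_group_def)

lemma one_wreath_int: "\<one>\<^bsub>wreath_int A\<^esub> = (\<lambda>x. \<one>\<^bsub>A\<^esub>, 0)"
  by (simp add: wreath_def integer_group_def)

lemma group_wreath_int:
  assumes "group A" shows "group (wreath_int A)"
proof -
  interpret A: group A by fact
  show ?thesis
  proof (rule groupI)
    show "\<exists>y\<in>carrier (wreath_int A). y \<otimes>\<^bsub>wreath_int A\<^esub> x = \<one>\<^bsub>wreath_int A\<^esub>"
      if "x \<in> carrier (wreath_int A)" for x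
    proof (cases x)
      case (Pair f b)
      let ?y = "(\<lambda>k. inv\<^bsub>A\<^esub> f (k - b), - b)"
      have "?y \<in> carrier (wreath_int A)" "?y \<otimes>\<^bsub>wreath_int A\<^esub> x = \<one>\<^bsub>wreath_int A\<^esub>"
        using that Pair by (auto simp: carrier_wreath_int mult_wreath_int one_wreath_int)
      then show ?thesis by blast
    qed
  qed (auto simp: carrier_wreath_int mult_wreath_int one_wreath_int A.m_assoc add.assoc)
qed

lemma snd_nat_pow_wreath_int: "snd (x [^]\<^bsub>wreath_int A\<^esub> (n::nat)) = int n * snd x"
  by (induction n) (auto simp: one_wreath_int mult_wreath_int algebra_simps)

lemma nat_pow_wreath_int_base:
  "(f, 0) [^]\<^bsub>wreath_int A\<^esub> (n::nat) = (\<lambda>x. f x [^]\<^bsub>A\<^esub> n, 0)"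
  by (induction n) (auto simp: one_wreath_int mult_wreath_int)

lemma snd_hom_wreath_int:
  assumes "group A" shows "group_hom (wreath_int A) integer_group snd"
  by (intro group_hom.intro group_hom_axioms.intro group_wreath_int assms group_integer_group)
     (auto simp: hom_def mult_wreath_int)

lemma torsion_free_wreath_int:
  assumes "torsion_free A" shows "torsion_free (wreath_int A)"
  unfolding torsion_free_def
proof (intro ballI impI allI notI)
  fix x and n :: nat
  assume x: "x \<in> carrier (wreath_int A)" "x \<noteq> \<one>\<^bsub>wreath_int A\<^esub>" and "0 < n"
    and xn: "x [^]\<^bsub>wreath_int A\<^esub> n = \<one>\<^bsub>wreath_int A\<^esub>"
  obtain f b where fb: "x = (f, b)" by (cases x)
  have "int n * b = 0"
    using arg_cong[OF xn, of snd] by (simp add: snd_nat_pow_wreath_int fb one_wreath_int)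
  with \<open>0 < n\<close> have b: "b = 0" by simp
  have "f k [^]\<^bsub>A\<^esub> n = \<one>\<^bsub>A\<^esub>" "f k \<in> carrier A" for k
    using xn x(1) by (simp_all add: fb b nat_pow_wreath_int_base one_wreath_int carrier_wreath_int fun_eq_iff)
  with assms \<open>0 < n\<close> have "f k = \<one>\<^bsub>A\<^esub>" for k
    unfolding torsion_free_def by blast
  with x(2) show False by (simp add: fb b one_wreath_int fun_eq_iff)
qed

lemma torsion_free_restrict_carrier:
  assumes "torsion_free G" "Y \<subseteq> carrier G" shows "torsion_free (G\<lparr>carrier := Y\<rparr>)"
proof -
  have "x [^]\<^bsub>G\<lparr>carrier := Y\<rparr>\<^esub> (n::nat) = x [^]\<^bsub>G\<^esub> n" for x n
    unfolding nat_pow_def by simp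
  with assms show ?thesis unfolding torsion_free_def by auto
qed

definition indicable :: "('a,'c) monoid_scheme \<Rightarrow> bool" where
  "indicable G \<longleftrightarrow> (\<exists>f \<in> hom G integer_group. f ` carrier G = UNIV)"

lemma locally_indicable_iff_indicable:
  "locally_indicable G \<longleftrightarrow>
     (\<forall>S. finite S \<and> S \<subseteq> carrier G \<and> generate G S \<noteq> {\<one>\<^bsub>G\<^esub>} \<longrightarrow> indicable (subgroup_generated G S))"
  unfolding locally_indicable_def indicable_def
  by (intro iff_allI) (auto simp: carrier_subgroup_generated Int_absorb1)

lemma indicable_if_surjective_hom:
  assumes "h \<in> hom G K" "h ` carrier G = carrier K" "indicable K"
  shows "indicable G"
proof -
  from assms(3) obtain f where f: "f \<in> hom K integer_group" "f ` carrier K = UNIV"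
    unfolding indicable_def by blast
  have "f \<circ> h \<in> hom G integer_group" using assms(1) f(1) by (rule hom_compose)
  moreover have "(f \<circ> h) ` carrier G = UNIV" using assms(2) f(2) by (metis image_comp)
  ultimately show ?thesis unfolding indicable_def by blast
qed

lemma subgroup_integer_group_multiples:
  assumes P: "subgroup P integer_group"
  shows "\<exists>d\<ge>0. P = range (\<lambda>k. k * d)"
proof -
  have mult_closed: "k * x \<in> P" if "x \<in> P" for k x
    using group.subgroup_int_pow_closed[OF group_integer_group P that, of k] by simp
  show ?thesis
  proof (cases "\<exists>n::nat. 0 < n \<and> int n \<in> P")
    case False
    have "p = 0" if "p \<in> P" for p
    proof (rule ccontr)
      assume "p \<noteq> 0"
      have "\<bar>p\<bar> \<in> P"
        using mult_closed[OF that, of "sgn p"] by (simp add: abs_sgn mult.commute)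
      then have "int (nat \<bar>p\<bar>) \<in> P" by simp
      with \<open>p \<noteq> 0\<close> False show False by (metis nat_0_iff abs_ge_zero abs_eq_0 dual_order.antisym gr0I)
    qed
    then have "P = {0}" using subgroup.one_closed[OF P] by auto
    then show ?thesis by (intro exI[of _ 0]) auto
  next
    case True
    define d where "d = (LEAST n::nat. 0 < n \<and> int n \<in> P)"
    have d: "0 < d" "int d \<in> P" using LeastI_ex[OF True] unfolding d_def by auto
    have "p \<in> range (\<lambda>k. k * int d)" if "p \<in> P" for p
    proof -
      \<comment> \<open>the remainder of p modulo d lies in P and is smaller than the least positive element d\<close>
      have "p + (- (p div int d)) * int d \<in> P"
        using subgroup.m_closed[OF P that mult_closed[OF d(2), of "- (p div int d)"]]
        by (simp only: mult_integer_group)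
      then have "p mod int d \<in> P" by (metis minus_div_mult_eq_mod diff_conv_add_uminus mult_minus_left)
      then have "int (nat (p mod int d)) \<in> P" using d(1) by simp
      moreover have "nat (p mod int d) < d" using d(1) by (simp add: nat_less_iff)
      ultimately have "\<not> 0 < nat (p mod int d)"
        using Least_le[of "\<lambda>n. 0 < n \<and> int n \<in> P" "nat (p mod int d)"] unfolding d_def by linarith
      moreover have "0 \<le> p mod int d" using d(1) by simp
      ultimately have "p mod int d = 0" by linarith
      then show ?thesis by (metis mult_div_mod_eq add_0_right mult.commute rangeI)
    qed
    then have "P = range (\<lambda>k. k * int d)" using mult_closed[OF d(2)] by auto
    then show ?thesis by (intro exI[of _ "int d"]) auto
  qed
qed

lemma indicable_if_nontrivial_hom_integer_group:
  assumes "group G" "f \<in> hom G integer_group" "f ` carrier G \<noteq> {0}"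
  shows "indicable G"
proof -
  have "subgroup (f ` carrier G) integer_group"
    using group_hom.img_is_subgroup assms(1,2) group_integer_group
    by (metis group_hom.intro group_hom_axioms.intro)
  then obtain d where d: "d \<ge> 0" "f ` carrier G = range (\<lambda>k. k * d)"
    using subgroup_integer_group_multiples by blast
  with assms(3) have "d \<noteq> 0" by auto
  have "(\<lambda>x. f x div d) \<in> hom G integer_group"
  proof (rule homI)
    fix x y assume xy: "x \<in> carrier G" "y \<in> carrier G"
    have "d dvd f z" if "z \<in> carrier G" for z
      using imageI[OF that, of f] d(2) by auto
    moreover have "f (x \<otimes>\<^bsub>G\<^esub> y) = f x + f y" using assms(2) xy by (simp add: hom_mult)
    ultimately show "f (x \<otimes>\<^bsub>G\<^esub> y) div d = (f x div d) \<otimes>\<^bsub>integer_group\<^esub> (f y div d)"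
      using xy by (simp add: div_add)
  qed simp
  moreover have "(\<lambda>x. f x div d) ` carrier G = UNIV"
  proof -
    have "(\<lambda>x. f x div d) ` carrier G = (\<lambda>m. m div d) ` range (\<lambda>k. k * d)"
      by (simp only: d(2)[symmetric] image_image)
    also have "\<dots> = UNIV" using \<open>d \<noteq> 0\<close> by (auto simp: image_image)
    finally show ?thesis .
  qed
  ultimately show ?thesis unfolding indicable_def by blast
qed

lemma locally_indicable_restrict_carrier:
  assumes "group G" "subgroup Y G" "locally_indicable G"
  shows "locally_indicable (G\<lparr>carrier := Y\<rparr>)"
  unfolding locally_indicable_iff_indicable
proof (intro allI impI)
  interpret G: group G by fact
  fix S assume S: "finite S \<and> S \<subseteq> carrier (G\<lparr>carrier := Y\<rparr>) \<and>
    generate (G\<lparr>carrier := Y\<rparr>) S \<noteq> {\<one>\<^bsub>G\<lparr>carrier := Y\<rparr>\<^esub>}"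
  then have SY: "S \<subseteq> Y" by simp
  then have SG: "S \<subseteq> carrier G" using subgroup.subset[OF assms(2)] by blast
  have gen: "generate (G\<lparr>carrier := Y\<rparr>) S = generate G S"
    using G.generate_consistent[OF SY assms(2)] .
  with SY SG have "subgroup_generated (G\<lparr>carrier := Y\<rparr>) S = subgroup_generated G S"
    by (simp add: subgroup_generated_def Int_absorb1)
  moreover have "indicable (subgroup_generated G S)"
    using assms(3) S SG gen unfolding locally_indicable_iff_indicable by simp
  ultimately show "indicable (subgroup_generated (G\<lparr>carrier := Y\<rparr>) S)" by simp
qed

lemma hom_image_carrier_subgroup_generated:
  assumes "group G" "group K" "S \<subseteq> carrier G" "h \<in> hom (subgroup_generated G S) K"
  shows "h ` carrier (subgroup_generated G S) = generate K (h ` S)"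
proof -
  interpret G: group G by fact
  interpret h: group_hom "subgroup_generated G S" K h
    by (intro group_hom.intro group_hom_axioms.intro G.group_subgroup_generated assms)
  have carrier: "carrier (subgroup_generated G S) = generate G S"
    using assms(3) by (simp add: carrier_subgroup_generated Int_absorb1)
  have "generate (subgroup_generated G S) S = generate G S"
    unfolding subgroup_generated_def using assms(3)
    by (simp add: Int_absorb1 G.generate_consistent[OF generate.incl[of _ S G, THEN subsetI] G.generate_is_subgroup])
  moreover have "S \<subseteq> carrier (subgroup_generated G S)"
    using assms(3) by (rule G.subgroup_generated_subset_carrier_subset)
  ultimately show ?thesis using h.generate_img[of S] carrier by simp
qed

lemma coordinate_hom_wreath_int:
  assumes "group A" "S \<subseteq> kernel (wreath_int A) integer_group snd"
  shows "(\<lambda>x. fst x k) \<in> hom (subgroup_generated (wreath_int A) S) A"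
proof -
  interpret snd: group_hom "wreath_int A" integer_group snd
    using assms(1) by (rule snd_hom_wreath_int)
  have "carrier (subgroup_generated (wreath_int A) S) \<subseteq> kernel (wreath_int A) integer_group snd"
    using snd.subgroup_kernel assms(2) by (rule snd.G.subgroup_generated_minimal)
  then show ?thesis
    by (intro homI) (auto simp: kernel_def carrier_wreath_int mult_wreath_int)
qed

lemma locally_indicable_wreath_int:
  assumes "group A" "locally_indicable A"
  shows "locally_indicable (wreath_int A)"
  unfolding locally_indicable_iff_indicable
proof (intro allI impI)
  interpret snd: group_hom "wreath_int A" integer_group snd
    using assms(1) by (rule snd_hom_wreath_int)
  fix S assume S: "finite S \<and> S \<subseteq> carrier (wreath_int A) \<and>
    generate (wreath_int A) S \<noteq> {\<one>\<^bsub>wreath_int A\<^esub>}"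
  let ?G = "subgroup_generated (wreath_int A) S"
  have carrier_G: "carrier ?G = generate (wreath_int A) S"
    using S by (simp add: carrier_subgroup_generated Int_absorb1)
  show "indicable ?G"
  proof (cases "S \<subseteq> kernel (wreath_int A) integer_group snd")
    case False
    then obtain s where "s \<in> S" "snd s \<noteq> 0" using S by (auto simp: kernel_def)
    moreover have "s \<in> carrier ?G" using \<open>s \<in> S\<close> carrier_G by (simp add: generate.incl)
    ultimately have "snd ` carrier ?G \<noteq> {0}" by force
    then show ?thesis
      using snd.G.hom_from_subgroup_generated[OF snd.homh]
      by (intro indicable_if_nontrivial_hom_integer_group snd.G.group_subgroup_generated)
  next
    case True
    obtain y where y: "y \<in> carrier ?G" "y \<noteq> \<one>\<^bsub>wreath_int A\<^esub>"
      using S generate.one[of "wreath_int A" S] carrier_G by blast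
    have "carrier ?G \<subseteq> kernel (wreath_int A) integer_group snd"
      using snd.subgroup_kernel True by (rule snd.G.subgroup_generated_minimal)
    with y obtain k where k: "fst y k \<noteq> \<one>\<^bsub>A\<^esub>"
      by (cases y) (auto simp: kernel_def one_wreath_int fun_eq_iff)
    define T where "T = (\<lambda>x. fst x k) ` S"
    have TA: "T \<subseteq> carrier A" using S by (auto simp: T_def carrier_wreath_int)
    have hom: "(\<lambda>x. fst x k) \<in> hom ?G A"
      using assms(1) True by (rule coordinate_hom_wreath_int)
    have img: "(\<lambda>x. fst x k) ` carrier ?G = carrier (subgroup_generated A T)"
      using hom_image_carrier_subgroup_generated[OF snd.G.is_group assms(1) _ hom] S TA
      by (simp add: T_def carrier_subgroup_generated Int_absorb1)
    have "fst y k \<in> generate A T"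
      using img y(1) TA by (auto simp: carrier_subgroup_generated Int_absorb1)
    with k have "generate A T \<noteq> {\<one>\<^bsub>A\<^esub>}" by blast
    with assms(2) S TA have "indicable (subgroup_generated A T)"
      unfolding locally_indicable_iff_indicable T_def by blast
    moreover have "(\<lambda>x. fst x k) \<in> hom ?G (subgroup_generated A T)"
      using hom img assms(1) by (simp add: hom_into_subgroup_eq_gen)
    ultimately show ?thesis using img by (blast intro: indicable_if_surjective_hom)
  qed
qed

lemma Kgrp_eq: "Kgrp H a = (KW H)\<lparr>carrier := carrier (Kgrp H a)\<rparr>"
  by (simp add: Kgrp_def)

lemma Ggrp_eq: "Ggrp H a = (GW H a)\<lparr>carrier := carrier (Ggrp H a)\<rparr>"
  by (simp add: Ggrp_def)

context
  fixes H :: "('a,'c) monoid_scheme" and a :: "nat \<Rightarrow> 'a"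
  assumes group_H: "group H" and a_closed: "\<forall>i\<ge>1. a i \<in> carrier H"
begin

lemma subgroup_carrier_Kgrp: "subgroup (carrier (Kgrp H a)) (KW H)"
proof -
  have "insert (zelt H) (belt H a ` {1..}) \<subseteq> carrier (KW H)"
    using a_closed group.is_monoid[OF group_H, THEN monoid.one_closed]
    by (auto simp: KW_def carrier_wreath_int zelt_def belt_def)
  then show ?thesis
    unfolding Kgrp_def KW_def by (simp add: group.generate_is_subgroup group_wreath_int group_H)
qed

lemma group_Kgrp: "group (Kgrp H a)"
  using subgroup.subgroup_is_group[OF subgroup_carrier_Kgrp[unfolded KW_def] group_wreath_int[OF group_H]]
  by (simp add: Kgrp_def KW_def)

lemma cfun_closed: "cfun H a k \<in> carrier (Kgrp H a)"
proof -
  have "(THE i::nat. 0 < i \<and> k = 2 ^ i) \<ge> 1" if "0 < i" "k = 2 ^ i" for i :: nat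
  proof -
    have "(THE i::nat. 0 < i \<and> k = 2 ^ i) = i"
      using that by (intro the_equality) (auto simp: power_inject_exp)
    with \<open>0 < i\<close> show ?thesis by simp
  qed
  then show ?thesis
    using monoid.one_closed[OF group.is_monoid[OF group_Kgrp]]
    by (auto simp: cfun_def Kgrp_def generate.incl)
qed

lemma subgroup_carrier_Ggrp: "subgroup (carrier (Ggrp H a)) (GW H a)"
proof -
  have "{celt H a, selt H a} \<subseteq> carrier (GW H a)"
    using cfun_closed monoid.one_closed[OF group.is_monoid[OF group_Kgrp]]
    by (auto simp: GW_def carrier_wreath_int celt_def selt_def)
  then show ?thesis
    unfolding Ggrp_def GW_def by (simp add: group.generate_is_subgroup group_wreath_int group_Kgrp)
qed

end

theorem corollary3:
  fixes H :: "('a,'c) monoid_scheme" and a :: "nat \<Rightarrow> 'a"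
  assumes "group H"
    and "\<forall>i\<ge>1. a i \<in> carrier H"
    and "carrier H = generate H (a ` {1..})"
  shows "(torsion_free H \<longrightarrow> torsion_free (Ggrp H a))
       \<and> (locally_indicable H \<longrightarrow> locally_indicable (Ggrp H a))"
proof (intro conjI impI)
  note K = subgroup_carrier_Kgrp[OF assms(1,2), unfolded KW_def]
  note G = subgroup_carrier_Ggrp[OF assms(1,2), unfolded GW_def]
  note group_K = group_Kgrp[OF assms(1,2)]
  show "torsion_free (Ggrp H a)" if "torsion_free H"
  proof -
    have "torsion_free (Kgrp H a)"
      using torsion_free_restrict_carrier[OF torsion_free_wreath_int[OF that] subgroup.subset[OF K]]
      by (subst Kgrp_eq) (simp only: KW_def)
    then show ?thesis
      using torsion_free_restrict_carrier[OF torsion_free_wreath_int subgroup.subset[OF G]]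
      by (subst Ggrp_eq) (simp only: GW_def)
  qed
  show "locally_indicable (Ggrp H a)" if "locally_indicable H"
  proof -
    have "locally_indicable (Kgrp H a)"
      using locally_indicable_restrict_carrier[OF group_wreath_int[OF assms(1)] K
          locally_indicable_wreath_int[OF assms(1) that]]
      by (subst Kgrp_eq) (simp only: KW_def)
    then show ?thesis
      using locally_indicable_restrict_carrier[OF group_wreath_int[OF group_K] G
          locally_indicable_wreath_int[OF group_K]]
      by (subst Ggrp_eq) (simp only: GW_def)
  qed
qed

end
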